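(* Consider the scalar $N$-player linear-quadratic differential game and the matrix $\mathbf M$ described in the context. Let $\mu=(\mu_1,\dots,\mu_N)$ be a weight vector with $\mu_i>0$ and $\sum_i\mu_i=1$, and set $\mu^s_{\max}=\max_i\mu_i/s_i$. Then every feedback Nash equilibrium $(k_1,\dots,k_N)$ satisfies $$\sum_{i=1}^N\mu_ik_i\le\mu^s_{\max}\big(\varrho(\mathbf M)+a\big).$$ Hence the feedback price of anarchy satisfies $$\rho^{FB}_\mu\le\frac{\mu^s_{\max}\big(\varrho(\mathbf M)+a\big)}{\hat k_\mu},$$ where $\varrho(\mathbf M)$ denotes the spectral radius of $\mathbf M$. In particular, for the weights $\bar\mu_i=s_i/\sum_{j=1}^Ns_j$, $$\rho^{FB}_{\bar\mu}\le\frac{\varrho(\mathbf M)+a}{\big(\sum_{i=1}^Ns_i\big)\,\hat k_{\bar\mu}}.$$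
   Context: **Game.** The game is the infinite-horizon scalar linear-quadratic differential game with players $i\in\{1,\dots,N\}$. - State dynamics: $\dot x(t)=ax(t)+\sum_{i=1}^N b_iu_i(t)$, with $x(0)=x_0\neq0$. - Cost of player $i$: $L_i(u)=\int_0^\infty\big(q_ix(t)^2+r_iu_i(t)^2\big)\,dt$. - Parameters: $a\in\mathbb R$; $q_i>0$, $r_i>0$, $b_i\neq0$ are real scalars. - Notation: $s_i=b_i^2/r_i$ and $\sigma_i=s_iq_i$. **Feedback Nash equilibrium (standard characterization).** A feedback Nash equilibrium is an $N$-tuple of stationary linear policies $u_i=-\frac{b_i}{r_i}k_ix$ such that $(k_1,\dots,k_N)$ solves $$2\big(a-\sum_j s_jk_j\big)k_i+q_i+s_ik_i^2=0\quad\text{for all } i,$$ with $a-\sum_js_jk_j<0$. Player $i$'s cost is $k_ix_0^2$. **Social optimum.** For weights $\mu$, define $$\bar q_\mu=\sum_i\mu_iq_i,\qquad \bar b_\mu=\sum_i\frac{b_i^2}{\mu_ir_i},\qquad \hat k_\mu=\frac{a+\sqrt{a^2+\bar q_\mu\bar b_\mu}}{\bar b_\mu}.$$ The minimum over all controls of $\sum_i\mu_iL_i$ equals $\hat k_\mu x_0^2$. **Feedback price of anarchy.** It is defined as $$\rho^{FB}_\mu=\max\Big\{\sum_i\mu_ik_i/\hat k_\mu\Big\},$$ where the maximum (or supremum) is taken over all feedback Nash equilibria. **Matrix $\mathbf M$.** The matrix $\widetilde{\mathbf M}$ is a $2^N\times2^N$ real matrix whose rows and columns are indexed by subsets $\Omega\subseteq\{1,\dots,N\}$.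 Write $n_\Omega=|\Omega|$. - Row $\Omega=\emptyset$: entry $1$ in each column $\{j\}$ for $j=1,\dots,N$; entry $-a$ in column $\emptyset$; all other entries $0$. - Row $\Omega\neq\emptyset$: entry $\sigma_i/(2n_\Omega-1)$ in column $\Omega\setminus\{i\}$ for each $i\in\Omega$; entry $-1/(2n_\Omega-1)$ in column $\Omega\cup\{i\}$ for each $i\notin\Omega$; entry $a/(2n_\Omega-1)$ in column $\Omega$; all other entries $0$. Let $\mathbf D$ be the diagonal matrix with $\Omega$-th diagonal entry $\prod_{j\in\Omega}s_j$ (the empty product is $1$). Then $\mathbf M=\mathbf D^{-1}\widetilde{\mathbf M}\mathbf D$. *)

theory Defs
  imports "HOL-Analysis.Analysis"
begin

text \<open>Players are the elements of a finite type 'n (so N = CARD('n)).\<close>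

definition s_coef :: "('n \<Rightarrow> real) \<Rightarrow> ('n \<Rightarrow> real) \<Rightarrow> 'n \<Rightarrow> real" where
  "s_coef r b i = (b i)^2 / r i"

definition sigma_coef :: "('n \<Rightarrow> real) \<Rightarrow> ('n \<Rightarrow> real) \<Rightarrow> ('n \<Rightarrow> real) \<Rightarrow> 'n \<Rightarrow> real" where
  "sigma_coef q r b i = s_coef r b i * q i"

text \<open>Feedback Nash equilibrium (standard characterization via the coupled Riccati equations).\<close>
definition is_FNE :: "real \<Rightarrow> ('n::finite \<Rightarrow> real) \<Rightarrow> ('n \<Rightarrow> real) \<Rightarrow> ('n \<Rightarrow> real) \<Rightarrow> ('n \<Rightarrow> real) \<Rightarrow> bool" where
  "is_FNE a q r b k \<longleftrightarrow>
     (\<forall>i. 2 * (a - (\<Sum>j\<in>UNIV. s_coef r b j * k j)) * k i + q i + s_coef r b i * (k i)^2 = 0)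
     \<and> a - (\<Sum>j\<in>UNIV. s_coef r b j * k j) < 0"

definition k_hat :: "real \<Rightarrow> ('n::finite \<Rightarrow> real) \<Rightarrow> ('n \<Rightarrow> real) \<Rightarrow> ('n \<Rightarrow> real) \<Rightarrow> ('n \<Rightarrow> real) \<Rightarrow> real" where
  "k_hat a q r b \<mu> =
     (let qb = (\<Sum>i\<in>UNIV. \<mu> i * q i);
          bb = (\<Sum>i\<in>UNIV. (b i)^2 / (\<mu> i * r i))
      in (a + sqrt (a^2 + qb * bb)) / bb)"

definition PoA_FB :: "real \<Rightarrow> ('n::finite \<Rightarrow> real) \<Rightarrow> ('n \<Rightarrow> real) \<Rightarrow> ('n \<Rightarrow> real) \<Rightarrow> ('n \<Rightarrow> real) \<Rightarrow> real" where
  "PoA_FB a q r b \<mu> =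
     Sup {(\<Sum>i\<in>UNIV. \<mu> i * k i) / k_hat a q r b \<mu> | k. is_FNE a q r b k}"

definition M_tilde :: "real \<Rightarrow> ('n::finite \<Rightarrow> real) \<Rightarrow> ('n \<Rightarrow> real) \<Rightarrow> ('n \<Rightarrow> real) \<Rightarrow> real ^ ('n set) ^ ('n set)" where
  "M_tilde a q r b = (\<chi> \<Omega> \<Theta>.
     if \<Omega> = {} then
       (\<Sum>j\<in>UNIV. if \<Theta> = {j} then 1 else 0) + (if \<Theta> = {} then - a else 0)
     else
       ((\<Sum>i\<in>\<Omega>. if \<Theta> = \<Omega> - {i} then sigma_coef q r b i else 0)
        + (\<Sum>i\<in>UNIV - \<Omega>. if \<Theta> = insert i \<Omega> then -1 else 0)
        + (if \<Theta> = \<Omega> then a else 0)) / (2 * real (card \<Omega>) - 1))"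

definition D_mat :: "('n::finite \<Rightarrow> real) \<Rightarrow> ('n \<Rightarrow> real) \<Rightarrow> real ^ ('n set) ^ ('n set)" where
  "D_mat r b = (\<chi> \<Omega> \<Theta>. if \<Omega> = \<Theta> then (\<Prod>j\<in>\<Omega>. s_coef r b j) else 0)"

definition M_mat :: "real \<Rightarrow> ('n::finite \<Rightarrow> real) \<Rightarrow> ('n \<Rightarrow> real) \<Rightarrow> ('n \<Rightarrow> real) \<Rightarrow> real ^ ('n set) ^ ('n set)" where
  "M_mat a q r b = matrix_inv (D_mat r b) ** M_tilde a q r b ** D_mat r b"

definition spec_rad :: "real ^ 'm ^ 'm \<Rightarrow> real" where
  "spec_rad A = Max {cmod c | c. \<exists>v :: complex ^ 'm. v \<noteq> 0 \<and>
                       (\<chi> i j. complex_of_real (A $ i $ j)) *v v = (\<chi> i. c * v $ i)}"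

end

theory Submission
  imports Defs "HOL-Computational_Algebra.Polynomial"
begin

(*
  Let k be a feedback Nash equilibrium and put p_i = s_i k_i and
  l = (\<Sum>_j p_j) - a > 0.  Multiplying the i-th Riccati equation by s_i gives
  sigma_i = (2 l - p_i) p_i, and k_i > 0 follows from its sign pattern.  The vector
  indexed by subsets, \<Omega> \<mapsto> \<Prod>_{j\<in>\<Omega>} p_j, is then an eigenvector of M-tilde with
  eigenvalue l; conjugating with D, \<Omega> \<mapsto> \<Prod>_{j\<in>\<Omega>} k_j is an eigenvector of M.
  Since l is a real eigenvalue, l \<le> \<rho>(M), i.e. \<Sum>_j s_j k_j \<le> \<rho>(M) + a.  Writing
  \<mu>_i k_i = (\<mu>_i / s_i)(s_i k_i) gives the weighted bound, dividing by k_hat \<ge> 0 and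
  taking the supremum gives the price-of-anarchy bound, and the weights s_i / \<Sum> s
  make \<mu>_i / s_i constant.
*)

section \<open>The spectral radius dominates real eigenvalues\<close>

text \<open>Crude a-priori bound: every eigenvalue is bounded in modulus by the sum of the
  moduli of all entries (look at a coordinate of maximal modulus).\<close>
lemma eigenvalue_norm_le_entry_sum:
  fixes B :: "complex^'m^'m"
  assumes "v \<noteq> 0" "B *v v = c *s v"
  shows "cmod c \<le> (\<Sum>i\<in>UNIV. \<Sum>j\<in>UNIV. cmod (B$i$j))"
proof -
  define m where "m = Max (range (\<lambda>i. cmod (v$i)))"
  have "m \<in> range (\<lambda>i. cmod (v$i))" unfolding m_def by (rule Max_in) auto
  then obtain i0 where i0: "cmod (v$i0) = m" by auto
  have le: "cmod (v$j) \<le> m" for j unfolding m_def by (rule Max_ge) auto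
  obtain j where "v$j \<noteq> 0" using assms(1) by (metis vec_eq_iff zero_index)
  hence "cmod (v$j) > 0" by simp
  hence m_pos: "m > 0" using le[of j] by linarith
  have row: "c * v$i0 = (\<Sum>j\<in>UNIV. B$i0$j * v$j)"
    using arg_cong[OF assms(2), of "\<lambda>x. x$i0"] by (simp add: matrix_vector_mult_def)
  have "cmod c * m = cmod (c * v$i0)" using i0 by (simp add: norm_mult)
  also have "\<dots> = cmod (\<Sum>j\<in>UNIV. B$i0$j * v$j)" using row by (rule arg_cong)
  also have "\<dots> \<le> (\<Sum>j\<in>UNIV. cmod (B$i0$j) * cmod (v$j))"
    using norm_sum[of "\<lambda>j. B$i0$j * v$j" UNIV] by (simp add: norm_mult)
  also have "\<dots> \<le> (\<Sum>j\<in>UNIV. cmod (B$i0$j) * m)"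
    by (intro sum_mono mult_left_mono le) auto
  also have "\<dots> = (\<Sum>j\<in>UNIV. cmod (B$i0$j)) * m" by (simp add: sum_distrib_right)
  also have "\<dots> \<le> (\<Sum>i\<in>UNIV. \<Sum>j\<in>UNIV. cmod (B$i$j)) * m"
    using m_pos by (intro mult_right_mono member_le_sum) (auto intro: sum_nonneg)
  finally show ?thesis using m_pos by simp
qed

text \<open>A square matrix has finitely many eigenvalues: they are the roots of the
  characteristic polynomial det (B - c I), which is nonzero because it does not
  vanish at any c beyond the a-priori bound above.\<close>
lemma finite_eigenvalues:
  fixes B :: "complex^'m^'m"
  shows "finite {c. \<exists>v. v \<noteq> 0 \<and> B *v v = c *s v}"
proof -
  define shifted where "shifted c = (\<chi> i j. B$i$j - (if i = j then c else 0))" for c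
  define char_poly where "char_poly = (\<Sum>\<sigma>\<in>{\<sigma>. \<sigma> permutes (UNIV::'m set)}. of_int (sign \<sigma>) *
        (\<Prod>i\<in>UNIV. [: B$i$\<sigma> i, - (if \<sigma> i = i then 1 else 0) :]))"
  have poly_eq_det: "poly char_poly c = det (shifted c)" for c
    unfolding char_poly_def det_def shifted_def poly_sum poly_prod
    by (intro sum.cong refl arg_cong2[where f="(*)"]) (simp add: poly_prod, intro prod.cong, auto)
  have kernel: "shifted c *v v = 0 \<longleftrightarrow> B *v v = c *s v" for c v
  proof -
    have "(\<Sum>j\<in>UNIV. (B $ i $ j - (if i = j then c else 0)) * v $ j)
        = (\<Sum>j\<in>UNIV. B $ i $ j * v $ j) - c * v $ i" for i
      by (simp add: algebra_simps sum_subtractf if_distrib[of "\<lambda>x. _ * x"] cong: if_cong)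
    thus ?thesis by (simp add: shifted_def vec_eq_iff matrix_vector_mult_def)
  qed
  have det_zero: "det (shifted c) = 0 \<longleftrightarrow> (\<exists>v. v \<noteq> 0 \<and> B *v v = c *s v)" for c
  proof -
    have "det (shifted c) = 0 \<longleftrightarrow> \<not> (\<forall>x. shifted c *v x = 0 \<longrightarrow> x = 0)"
      using invertible_det_nz[of "shifted c"]
      unfolding invertible_left_inverse matrix_left_invertible_ker by simp
    thus ?thesis unfolding kernel by blast
  qed
  have "char_poly \<noteq> 0"
  proof
    assume "char_poly = 0"
    define R where "R = (\<Sum>i\<in>UNIV. \<Sum>j\<in>UNIV. cmod (B$i$j))"
    have "R \<ge> 0" unfolding R_def by (intro sum_nonneg) auto
    have "det (shifted (of_real (R+1))) = 0" using poly_eq_det \<open>char_poly = 0\<close> by simp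
    then obtain v where "v \<noteq> 0" "B *v v = of_real (R+1) *s v" using det_zero by blast
    from eigenvalue_norm_le_entry_sum[OF this] have "cmod (of_real (R+1)) \<le> R"
      unfolding R_def .
    with \<open>R \<ge> 0\<close> show False by simp
  qed
  hence "finite {c. poly char_poly c = 0}" by (rule poly_roots_finite)
  moreover have "{c. \<exists>v. v \<noteq> 0 \<and> B *v v = c *s v} \<subseteq> {c. poly char_poly c = 0}"
    using det_zero poly_eq_det by auto
  ultimately show ?thesis by (rule finite_subset[rotated])
qed

text \<open>A real eigenvalue of a real matrix is also a complex eigenvalue of it, hence
  bounded in modulus by the spectral radius.\<close>
lemma real_eigenvalue_le_spec_rad:
  fixes A :: "real^'m^'m" and w :: "real^'m"
  assumes "w \<noteq> 0" "A *v w = l *s w"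
  shows "\<bar>l\<bar> \<le> spec_rad A"
proof -
  define B where "B = (\<chi> i j. complex_of_real (A $ i $ j))"
  define v where "v = (\<chi> i. complex_of_real (w $ i))"
  let ?spectrum = "{c. \<exists>v. v \<noteq> 0 \<and> B *v v = c *s v}"
  have "v \<noteq> 0" using assms(1) unfolding v_def by (auto simp: vec_eq_iff)
  have "B *v v = of_real l *s v"
  proof -
    have "(\<Sum>j\<in>UNIV. A $ i $ j * w $ j) = l * w $ i" for i
      using arg_cong[OF assms(2), of "\<lambda>x. x $ i"] by (simp add: matrix_vector_mult_def)
    hence "(\<Sum>j\<in>UNIV. complex_of_real (A $ i $ j) * complex_of_real (w $ j))
          = complex_of_real l * complex_of_real (w $ i)" for i
      by (simp flip: of_real_mult of_real_sum)
    thus ?thesis by (simp add: B_def v_def matrix_vector_mult_def vec_eq_iff)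
  qed
  with \<open>v \<noteq> 0\<close> have "cmod (of_real l) \<in> cmod ` ?spectrum" by blast
  moreover have "{cmod c | c. \<exists>v :: complex ^ 'm. v \<noteq> 0 \<and>
                       (\<chi> i j. complex_of_real (A $ i $ j)) *v v = (\<chi> i. c * v $ i)}
               = cmod ` ?spectrum"
    unfolding B_def by (auto simp: vec_eq_iff)
  moreover have "finite (cmod ` ?spectrum)" by (intro finite_imageI finite_eigenvalues)
  ultimately have "cmod (of_real l) \<le> spec_rad A" unfolding spec_rad_def by (simp add: Max_ge)
  thus ?thesis by simp
qed

section \<open>The product vectors are eigenvectors of M-tilde and M\<close>

definition subset_prod :: "('n::finite \<Rightarrow> real) \<Rightarrow> real ^ ('n set)" where
  "subset_prod p = (\<chi> \<Omega>. \<Prod>j\<in>\<Omega>. p j)"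

lemma subset_prod_nonzero: "subset_prod p \<noteq> 0"
proof
  assume "subset_prod p = 0"
  hence "subset_prod p $ {} = 0" by simp
  thus False by (simp add: subset_prod_def)
qed

lemma sum_indicator_columns:
  fixes h :: "'a::finite \<Rightarrow> real"
  assumes "finite A"
  shows "(\<Sum>\<Theta>\<in>UNIV. (\<Sum>i\<in>A. if \<Theta> = f i then g i else 0) * h \<Theta>) = (\<Sum>i\<in>A. g i * h (f i))"
proof -
  have "(\<Sum>\<Theta>\<in>UNIV. (\<Sum>i\<in>A. if \<Theta> = f i then g i else 0) * h \<Theta>)
      = (\<Sum>i\<in>A. \<Sum>\<Theta>\<in>UNIV. if \<Theta> = f i then g i * h \<Theta> else 0)"
    by (subst sum.swap) (simp add: sum_distrib_right if_distrib[of "\<lambda>x. x * _"] cong: if_cong)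
  thus ?thesis by simp
qed

lemma M_tilde_row_empty:
  "(M_tilde a q r b *v v) $ {} = (\<Sum>j\<in>UNIV. v $ {j}) - a * v $ {}"
proof -
  have "(M_tilde a q r b *v v) $ {}
      = (\<Sum>\<Theta>\<in>UNIV. (\<Sum>j\<in>UNIV. if \<Theta> = {j} then 1 else 0) * v $ \<Theta>)
        + (\<Sum>\<Theta>\<in>UNIV. (if \<Theta> = {} then - a else 0) * v $ \<Theta>)"
    by (simp add: M_tilde_def matrix_vector_mult_def distrib_right sum.distrib)
  also have "\<dots> = (\<Sum>j\<in>UNIV. v $ {j}) - a * v $ {}"
    by (subst sum_indicator_columns) (simp_all add: if_distrib[of "\<lambda>x. x * _"] cong: if_cong)
  finally show ?thesis .
qed

lemma M_tilde_row_nonempty: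
  assumes "\<Omega> \<noteq> {}"
  shows "(M_tilde a q r b *v v) $ \<Omega>
       = ((\<Sum>i\<in>\<Omega>. sigma_coef q r b i * v $ (\<Omega> - {i}))
          - (\<Sum>i\<in>UNIV - \<Omega>. v $ insert i \<Omega>) + a * v $ \<Omega>) / (2 * real (card \<Omega>) - 1)"
proof -
  have "(M_tilde a q r b *v v) $ \<Omega>
      = ((\<Sum>\<Theta>\<in>UNIV. (\<Sum>i\<in>\<Omega>. if \<Theta> = \<Omega> - {i} then sigma_coef q r b i else 0) * v $ \<Theta>)
        + (\<Sum>\<Theta>\<in>UNIV. (\<Sum>i\<in>UNIV - \<Omega>. if \<Theta> = insert i \<Omega> then -1 else 0) * v $ \<Theta>)
        + (\<Sum>\<Theta>\<in>UNIV. (if \<Theta> = \<Omega> then a else 0) * v $ \<Theta>)) / (2 * real (card \<Omega>) - 1)"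
    using assms by (simp add: M_tilde_def matrix_vector_mult_def distrib_right sum.distrib
        sum_divide_distrib[symmetric])
  also have "\<dots> = ((\<Sum>i\<in>\<Omega>. sigma_coef q r b i * v $ (\<Omega> - {i}))
          + (\<Sum>i\<in>UNIV - \<Omega>. - v $ insert i \<Omega>) + a * v $ \<Omega>) / (2 * real (card \<Omega>) - 1)"
    by (subst sum_indicator_columns, simp, subst sum_indicator_columns, simp)
       (simp add: if_distrib[of "\<lambda>x. x * _"] cong: if_cong)
  finally show ?thesis by (simp add: sum_negf)
qed

text \<open>In the row of \<Omega> the
  terms add up to (2|\<Omega>| l - \<Sum> p + a) times the \<Omega>-entry, i.e. (2|\<Omega>| - 1) l times it.\<close>
lemma M_tilde_subset_prod_eigen:
  fixes p :: "'n::finite \<Rightarrow> real" and l :: real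
  assumes sigma: "\<And>i. sigma_coef q r b i = (2 * l - p i) * p i"
    and l_def: "l = (\<Sum>j\<in>UNIV. p j) - a"
  shows "M_tilde a q r b *v subset_prod p = l *s subset_prod p"
proof -
  let ?v = "subset_prod p"
  have "(M_tilde a q r b *v ?v) $ \<Omega> = l * ?v $ \<Omega>" for \<Omega>
  proof (cases "\<Omega> = {}")
    case True
    thus ?thesis by (simp add: M_tilde_row_empty subset_prod_def l_def)
  next
    case False
    define n where "n = card \<Omega>"
    have "n \<ge> 1" using False unfolding n_def by (simp add: Suc_leI card_gt_0_iff)
    have remove: "sigma_coef q r b i * ?v $ (\<Omega> - {i}) = (2 * l - p i) * ?v $ \<Omega>" if "i \<in> \<Omega>" for i
      using that sigma by (simp add: subset_prod_def prod.remove)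
    have add: "?v $ insert i \<Omega> = p i * ?v $ \<Omega>" if "i \<in> UNIV - \<Omega>" for i
      using that by (simp add: subset_prod_def)
    have split: "(\<Sum>i\<in>\<Omega>. p i) + (\<Sum>i\<in>UNIV - \<Omega>. p i) = (\<Sum>i\<in>UNIV. p i)"
      using sum.subset_diff[of \<Omega> UNIV p] by simp
    have "(\<Sum>i\<in>\<Omega>. sigma_coef q r b i * ?v $ (\<Omega> - {i})) - (\<Sum>i\<in>UNIV - \<Omega>. ?v $ insert i \<Omega>)
          + a * ?v $ \<Omega>
        = ?v $ \<Omega> * (2 * real n * l - ((\<Sum>i\<in>\<Omega>. p i) + (\<Sum>i\<in>UNIV - \<Omega>. p i)) + a)"
      by (simp add: remove add sum_distrib_right[symmetric] sum_subtractf n_def algebra_simps)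
    also have "\<dots> = (2 * real n - 1) * (l * ?v $ \<Omega>)"
      unfolding split l_def by (simp add: algebra_simps)
    finally show ?thesis
      using False \<open>n \<ge> 1\<close> by (simp add: M_tilde_row_nonempty n_def)
  qed
  thus ?thesis by (simp add: vec_eq_iff)
qed

lemma D_mat_subset_prod:
  "D_mat r b *v subset_prod k = subset_prod (\<lambda>i. s_coef r b i * k i)"
  by (simp add: D_mat_def subset_prod_def matrix_vector_mult_def vec_eq_iff
      if_distrib[of "\<lambda>x. x * _"] prod.distrib cong: if_cong)

text \<open>D is diagonal with nonzero diagonal when all s_j are nonzero, hence invertible.\<close>
lemma D_mat_left_inverse:
  assumes "\<And>j. s_coef r b j \<noteq> 0"
  shows "matrix_inv (D_mat r b :: real^('n::finite set)^('n set)) ** D_mat r b = mat 1"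
proof -
  let ?D = "D_mat r b :: real^('n set)^('n set)"
  define D_inv :: "real^('n set)^('n set)" where
    "D_inv = (\<chi> \<Omega> \<Theta>. if \<Omega> = \<Theta> then 1 / (\<Prod>j\<in>\<Omega>. s_coef r b j) else 0)"
  have "(\<Prod>j\<in>\<Omega>. s_coef r b j) \<noteq> 0" for \<Omega> :: "'n set"
    using assms by (simp add: prod_zero_iff)
  hence "?D ** D_inv = mat 1 \<and> D_inv ** ?D = mat 1"
    by (auto simp: D_mat_def D_inv_def matrix_matrix_mult_def mat_def vec_eq_iff
        if_distrib[of "\<lambda>x. x * _"] cong: if_cong)
  hence "\<exists>A'. ?D ** A' = mat 1 \<and> A' ** ?D = mat 1" by blast
  from someI_ex[OF this] show ?thesis unfolding matrix_inv_def by blast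
qed

lemma M_subset_prod_eigen:
  assumes s_nz: "\<And>j. s_coef r b j \<noteq> 0"
    and sigma: "\<And>i. sigma_coef q r b i = (2 * l - s_coef r b i * k i) * (s_coef r b i * k i)"
    and l_def: "l = (\<Sum>j\<in>UNIV. s_coef r b j * k j) - a"
  shows "M_mat a q r b *v subset_prod k = l *s subset_prod k"
proof -
  let ?D = "D_mat r b" and ?w = "subset_prod k"
  have "M_mat a q r b *v ?w = matrix_inv ?D *v (M_tilde a q r b *v (?D *v ?w))"
    unfolding M_mat_def by (simp add: matrix_vector_mul_assoc matrix_mul_assoc)
  also have "\<dots> = matrix_inv ?D *v (l *s (?D *v ?w))"
    unfolding D_mat_subset_prod using M_tilde_subset_prod_eigen[OF sigma l_def] by simp
  also have "\<dots> = l *s ((matrix_inv ?D ** ?D) *v ?w)"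
    by (simp add: matrix_vector_mul_assoc vec.scale)
  also have "\<dots> = l *s ?w" using D_mat_left_inverse[OF s_nz] by simp
  finally show ?thesis .
qed

section \<open>Feedback Nash equilibria\<close>

lemma s_coef_pos:
  assumes "r i > 0" "b i \<noteq> 0"
  shows "s_coef r b i > 0"
  using assms by (simp add: s_coef_def)

text \<open>Equilibrium gains are positive: in 2 (a - \<Sum> s_j k_j) k_i = -(q_i + s_i k_i^2) < 0
  the first factor is negative by the stability condition.\<close>
lemma FNE_gain_pos:
  assumes "is_FNE a q r b k" "q i > 0" "s_coef r b i > 0"
  shows "k i > 0"
proof -
  let ?P = "\<Sum>j\<in>UNIV. s_coef r b j * k j"
  have riccati: "2 * (a - ?P) * k i + q i + s_coef r b i * (k i)^2 = 0"
    and stable: "a - ?P < 0"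
    using assms(1) unfolding is_FNE_def by blast+
  have "q i + s_coef r b i * (k i)^2 > 0" using assms(2,3) by (simp add: add_pos_nonneg)
  with riccati have "(a - ?P) * k i < 0" by linarith
  with stable show ?thesis by (simp add: mult_less_0_iff)
qed

text \<open>The i-th Riccati equation multiplied by s_i, in the variables p_i = s_i k_i and
  l = \<Sum> p - a: this is exactly the hypothesis of the key identity.\<close>
lemma FNE_sigma_relation:
  assumes "is_FNE a q r b k"
  shows "sigma_coef q r b i
       = (2 * ((\<Sum>j\<in>UNIV. s_coef r b j * k j) - a) - s_coef r b i * k i) * (s_coef r b i * k i)"
proof -
  have "s_coef r b i * (2 * (a - (\<Sum>j\<in>UNIV. s_coef r b j * k j)) * k i + q i
          + s_coef r b i * (k i)^2) = 0"
    using assms unfolding is_FNE_def by simp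
  thus ?thesis unfolding sigma_coef_def by (simp add: algebra_simps power2_eq_square)
qed

text \<open>Main estimate: the stability margin \<Sum> s_j k_j - a > 0 of an equilibrium is a real
  eigenvalue of M, so it is at most the spectral radius.\<close>
lemma FNE_aggregate_le_spec_rad:
  assumes "is_FNE a q r b k" "\<And>j. s_coef r b j \<noteq> 0"
  shows "(\<Sum>j\<in>UNIV. s_coef r b j * k j) \<le> spec_rad (M_mat a q r b) + a"
proof -
  define l where "l = (\<Sum>j\<in>UNIV. s_coef r b j * k j) - a"
  have "M_mat a q r b *v subset_prod k = l *s subset_prod k"
    using M_subset_prod_eigen[OF assms(2) FNE_sigma_relation[OF assms(1)]] l_def by simp
  from real_eigenvalue_le_spec_rad[OF subset_prod_nonzero this]
  have "\<bar>l\<bar> \<le> spec_rad (M_mat a q r b)" .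
  thus ?thesis unfolding l_def by linarith
qed

section \<open>Weighted costs and the price of anarchy\<close>

text \<open>Writing \<mu>_i k_i = (\<mu>_i / s_i) (s_i k_i) with s_i k_i > 0 and bounding \<mu>_i / s_i by
  its maximum.\<close>
lemma FNE_weighted_cost_le:
  fixes a :: real and q r b \<mu> k :: "'n::finite \<Rightarrow> real"
  assumes q_pos: "\<forall>i. q i > 0" and r_pos: "\<forall>i. r i > 0" and b_nz: "\<forall>i. b i \<noteq> 0"
    and mu_pos: "\<forall>i. \<mu> i > 0" and fne: "is_FNE a q r b k"
  shows "(\<Sum>i\<in>UNIV. \<mu> i * k i)
       \<le> Max (range (\<lambda>i. \<mu> i / s_coef r b i)) * (spec_rad (M_mat a q r b) + a)"
proof -
  let ?s = "s_coef r b" and ?mx = "Max (range (\<lambda>i. \<mu> i / s_coef r b i))"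
  have s_pos: "?s i > 0" for i using r_pos b_nz by (simp add: s_coef_pos)
  have k_pos: "k i > 0" for i using FNE_gain_pos[OF fne] q_pos s_pos by blast
  have mx_ge: "\<mu> i / ?s i \<le> ?mx" for i by (rule Max_ge) auto
  have "0 < \<mu> i / ?s i" for i using mu_pos s_pos by simp
  hence mx_nonneg: "?mx \<ge> 0" using mx_ge by (meson less_le_trans less_imp_le)
  have "(\<Sum>i\<in>UNIV. \<mu> i * k i) = (\<Sum>i\<in>UNIV. (\<mu> i / ?s i) * (?s i * k i))"
    using s_pos by (intro sum.cong refl) (simp add: less_imp_neq[symmetric])
  also have "\<dots> \<le> (\<Sum>i\<in>UNIV. ?mx * (?s i * k i))"
    using k_pos s_pos by (intro sum_mono mult_right_mono mx_ge) (auto intro: less_imp_le)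
  also have "\<dots> = ?mx * (\<Sum>i\<in>UNIV. ?s i * k i)" by (simp add: sum_distrib_left)
  also have "\<dots> \<le> ?mx * (spec_rad (M_mat a q r b) + a)"
    using FNE_aggregate_le_spec_rad[OF fne] s_pos mx_nonneg
    by (intro mult_left_mono) (auto simp: less_imp_neq[symmetric])
  finally show ?thesis .
qed

text \<open>For positive weights the social optimum coefficient is nonnegative, since
  sqrt (a^2 + qb bb) \<ge> |a|.\<close>
lemma k_hat_nonneg:
  assumes "\<forall>i. q i > 0" "\<forall>i. r i > 0" "\<forall>i. \<mu> i > 0"
  shows "k_hat a q r b \<mu> \<ge> 0"
proof -
  define qb where "qb = (\<Sum>i\<in>UNIV. \<mu> i * q i)"
  define bb where "bb = (\<Sum>i\<in>UNIV. (b i)^2 / (\<mu> i * r i))"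
  have "qb \<ge> 0" unfolding qb_def using assms by (intro sum_nonneg) (simp add: less_imp_le)
  moreover have "bb \<ge> 0" unfolding bb_def using assms
    by (intro sum_nonneg divide_nonneg_pos mult_pos_pos) auto
  ultimately have "sqrt (a^2) \<le> sqrt (a^2 + qb * bb)" by (intro real_sqrt_le_mono) simp
  hence "a + sqrt (a^2 + qb * bb) \<ge> 0" by simp
  with \<open>bb \<ge> 0\<close> show ?thesis unfolding k_hat_def Let_def qb_def[symmetric] bb_def[symmetric]
    by simp
qed

lemma PoA_FB_le:
  assumes "\<exists>k. is_FNE a q r b k" "k_hat a q r b \<mu> \<ge> 0"
    and "\<And>k. is_FNE a q r b k \<Longrightarrow> (\<Sum>i\<in>UNIV. \<mu> i * k i) \<le> B"
  shows "PoA_FB a q r b \<mu> \<le> B / k_hat a q r b \<mu>"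
  unfolding PoA_FB_def
proof (rule cSup_least)
  show "{(\<Sum>i\<in>UNIV. \<mu> i * k i) / k_hat a q r b \<mu> |k. is_FNE a q r b k} \<noteq> {}"
    using assms(1) by blast
next
  fix x assume "x \<in> {(\<Sum>i\<in>UNIV. \<mu> i * k i) / k_hat a q r b \<mu> |k. is_FNE a q r b k}"
  then obtain k where "is_FNE a q r b k" "x = (\<Sum>i\<in>UNIV. \<mu> i * k i) / k_hat a q r b \<mu>" by blast
  thus "x \<le> B / k_hat a q r b \<mu>" using assms(2,3) by (simp add: divide_right_mono)
qed

theorem theorem5:
  fixes a :: real and q r b \<mu> :: "'n::finite \<Rightarrow> real"
  assumes q_pos: "\<forall>i. q i > 0"
    and r_pos: "\<forall>i. r i > 0"
    and b_nz: "\<forall>i. b i \<noteq> 0"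
    and mu_pos: "\<forall>i. \<mu> i > 0"
    and mu_sum: "(\<Sum>i\<in>UNIV. \<mu> i) = 1"
  shows "(\<forall>k. is_FNE a q r b k \<longrightarrow>
            (\<Sum>i\<in>UNIV. \<mu> i * k i)
              \<le> Max (range (\<lambda>i. \<mu> i / s_coef r b i)) * (spec_rad (M_mat a q r b) + a))
       \<and> ((\<exists>k. is_FNE a q r b k) \<longrightarrow>
            PoA_FB a q r b \<mu>
              \<le> Max (range (\<lambda>i. \<mu> i / s_coef r b i)) * (spec_rad (M_mat a q r b) + a)
                 / k_hat a q r b \<mu>)
       \<and> ((\<exists>k. is_FNE a q r b k) \<longrightarrow>
            PoA_FB a q r b (\<lambda>i. s_coef r b i / (\<Sum>j\<in>UNIV. s_coef r b j))
              \<le> (spec_rad (M_mat a q r b) + a)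
                 / ((\<Sum>j\<in>UNIV. s_coef r b j) * k_hat a q r b (\<lambda>i. s_coef r b i / (\<Sum>j\<in>UNIV. s_coef r b j))))"
proof -
  have PoA_bound: "PoA_FB a q r b w
      \<le> Max (range (\<lambda>i. w i / s_coef r b i)) * (spec_rad (M_mat a q r b) + a) / k_hat a q r b w"
    if "\<forall>i. w i > 0" "\<exists>k. is_FNE a q r b k" for w
    using PoA_FB_le[OF that(2) k_hat_nonneg[OF q_pos r_pos that(1)]]
      FNE_weighted_cost_le[OF q_pos r_pos b_nz that(1)] by blast
  define S where "S = (\<Sum>j\<in>UNIV. s_coef r b j)"
  have s_pos: "s_coef r b i > 0" for i using r_pos b_nz by (simp add: s_coef_pos)
  hence "S > 0" unfolding S_def by (simp add: sum_pos)
  hence "\<forall>i. s_coef r b i / S > 0" using s_pos by simp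
  moreover have "range (\<lambda>i. s_coef r b i / S / s_coef r b i) = {1 / S}"
    using s_pos by (simp add: less_imp_neq[symmetric])
  ultimately have "(\<exists>k. is_FNE a q r b k) \<longrightarrow> PoA_FB a q r b (\<lambda>i. s_coef r b i / S)
      \<le> (spec_rad (M_mat a q r b) + a) / (S * k_hat a q r b (\<lambda>i. s_coef r b i / S))"
    using PoA_bound[of "\<lambda>i. s_coef r b i / S"] by simp
  thus ?thesis
    using FNE_weighted_cost_le[OF q_pos r_pos b_nz mu_pos] PoA_bound[OF mu_pos]
    unfolding S_def by blast
qed

end
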